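(* Let $n\ge 2$ be an integer. Suppose that for all integers $m,k$ with $2\le m\le n$, $2\le k\le 2^{m-1}+1$ and $k$ even one has $$v_2\big(s(2^n,2^m-k)\big)=2^n-2^m-(n-m)(2^m-k)+m-1-v_2(k).$$ Then for every integer $i$ with $1\le i\le 2^{n-1}$, $$v_2\big(s(2^n,2i-1)\big)=v_2\big(s(2^n,2i)\big)+n-1.$$
   Context: The (unsigned) Stirling numbers of the first kind $s(n,k)$ are defined by $x(x+1)\cdots(x+n-1)=\sum_{k=0}^n s(n,k)x^k$. $v_2$ denotes the $2$-adic valuation. *)

theory Defs
  imports "HOL-Combinatorics.Stirling" "HOL-Computational_Algebra.Primes"
begin

end

(*
  Write h = 2^(n-1). Pairing the factors x + j and x + 2h - j of the rising factorial
  x(x + 1)...(x + 2h - 1) turns it into x(x + h) K(x^2 + 2hx) for an integer polynomial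
  K = sum_r k_r y^r of degree < h, so that

    s(2h, l) = sum_r k_r [x^l] (x^2 + hx)(x^2 + 2hx)^r.

  The r-th summand vanishes for l > 2r + 2, equals k_r at l = 2r + 2 and k_r (2r + 1) h at
  l = 2r + 1, and is always divisible by 2^(n(2r + 2 - l) - 1) k_r. By the assumed formula,
  v_2(s(2h, 2i + 2)) drops by at most 2n - 2 from i to i + 1, so at l = 2i + 2 and 2i + 1 the
  summands with r > i are divisible by a higher power of 2 than the one with r = i.
  Downward induction on i thus gives v_2(k_i) = v_2(s(2h, 2i + 2)), and then
  v_2(s(2h, 2i + 1)) = v_2(k_i (2i + 1) h) = v_2(s(2h, 2i + 2)) + n - 1.
*)
theory Submission
  imports Defs "HOL-Computational_Algebra.Polynomial"
begin

section \<open>Valuations and unitriangular systems\<close>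

lemma multiplicity_of_nat: "multiplicity (int p) (int n) = multiplicity p n"
  unfolding multiplicity_def by (simp flip: of_nat_power)

lemma multiplicity_add_dvd:
  fixes x y :: "'a :: factorial_ring_gcd"
  assumes "x \<noteq> 0" "\<not> is_unit p" "p ^ Suc (multiplicity p x) dvd y"
  shows "x + y \<noteq> 0 \<and> multiplicity p (x + y) = multiplicity p x"
proof -
  have x_not_dvd: "\<not> p ^ Suc (multiplicity p x) dvd x"
    using power_dvd_iff_le_multiplicity[OF assms(1,2), of "Suc _"] by simp
  have "p ^ multiplicity p x dvd y"
    using assms(3) by (rule dvd_trans[rotated]) (simp add: le_imp_power_dvd)
  then have "p ^ multiplicity p x dvd x + y"
    by (simp add: multiplicity_dvd)
  moreover have sum_not_dvd: "\<not> p ^ Suc (multiplicity p x) dvd x + y"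
    using x_not_dvd assms(3) by (simp add: dvd_add_left_iff)
  ultimately have "multiplicity p (x + y) = multiplicity p x"
    by (rule multiplicity_eqI)
  moreover have "x + y \<noteq> 0"
    using sum_not_dvd by auto
  ultimately show ?thesis by simp
qed

lemma multiplicity_less_of_less:
  fixes x p :: nat
  assumes "0 < x" "x < p ^ k"
  shows "multiplicity p x < k"
proof (cases "p = 1")
  case True
  then show ?thesis using assms by simp
next
  case False
  have "p \<noteq> 0" using assms by (cases "p = 0"; cases k) auto
  with False have "1 < p" by simp
  have "p ^ multiplicity p x \<le> x"
    using assms(1) by (simp add: dvd_imp_le multiplicity_dvd)
  with assms(2) have "p ^ multiplicity p x < p ^ k" by linarith
  then show ?thesis using \<open>1 < p\<close> power_less_imp_less_exp by blast
qed

lemma mult_power_dvd_of_le: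
  fixes x y :: "'a :: comm_semiring_1"
  assumes "p ^ a dvd x" "p ^ b dvd y" "c \<le> a + b"
  shows "p ^ c dvd x * y"
proof -
  have "p ^ c dvd p ^ (a + b)" using assms(3) by (rule le_imp_power_dvd)
  also have "\<dots> dvd x * y" using assms(1,2) by (simp add: power_add mult_dvd_mono)
  finally show ?thesis .
qed

lemma multiplicity_triangular:
  fixes s k :: "nat \<Rightarrow> 'a :: factorial_ring_gcd" and a :: "nat \<Rightarrow> nat \<Rightarrow> 'a"
  assumes "prime_elem p"
    and s_eq: "\<And>i. i < h \<Longrightarrow> s i = k i + (\<Sum>r\<in>{i<..<h}. k r * a r i)"
    and s_nonzero: "\<And>i. i < h \<Longrightarrow> s i \<noteq> 0"
    and tail_dvd: "\<And>i r. i < r \<Longrightarrow> r < h \<Longrightarrow>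
      p ^ Suc (multiplicity p (s i)) dvd p ^ multiplicity p (s r) * a r i"
    and "i < h"
  shows "k i \<noteq> 0 \<and> multiplicity p (k i) = multiplicity p (s i)"
  using \<open>i < h\<close>
proof (induction "h - i" arbitrary: i rule: less_induct)
  case less
  have "p ^ Suc (multiplicity p (s i)) dvd k r * a r i" if r: "i < r" "r < h" for r
  proof -
    have "multiplicity p (k r) = multiplicity p (s r)"
      using less.hyps[of r] r by simp
    then have "p ^ multiplicity p (s r) * a r i dvd k r * a r i"
      by (metis multiplicity_dvd mult_dvd_mono dvd_refl)
    with tail_dvd[OF r] show ?thesis by (rule dvd_trans)
  qed
  then have "p ^ Suc (multiplicity p (s i)) dvd (\<Sum>r\<in>{i<..<h}. k r * a r i)"
    by (intro dvd_sum) simp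
  moreover have "k i = s i + - (\<Sum>r\<in>{i<..<h}. k r * a r i)"
    using s_eq[OF less.prems] by simp
  moreover have "\<not> is_unit p"
    using \<open>prime_elem p\<close> by (rule prime_elem_not_unit)
  ultimately show ?case
    using multiplicity_add_dvd[OF s_nonzero[OF less.prems]] dvd_minus_iff by metis
qed

lemma sum_lessThan_eq_term_plus_tail:
  fixes i h :: nat
  assumes "i < h" "\<And>r. r < i \<Longrightarrow> f r = 0"
  shows "(\<Sum>r<h. f r) = f i + (\<Sum>r\<in>{i<..<h}. f r)"
proof -
  have "(\<Sum>r<h. f r) = (\<Sum>r\<in>{i..<h}. f r)"
    by (rule sum.mono_neutral_right) (use assms(2) in auto)
  also have "\<dots> = f i + (\<Sum>r\<in>{Suc i..<h}. f r)"
    using assms(1) by (simp add: sum.atLeast_Suc_lessThan)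
  finally show ?thesis by (simp add: atLeastSucLessThan_greaterThanLessThan)
qed

section \<open>Coefficients of (x^2 + cx)(x^2 + dx)^r\<close>

lemma coeff_quad_power:
  "coeff ([:0, c, 1:] ^ r) t =
    (if r \<le> t \<and> t \<le> 2*r then of_nat (r choose (t - r)) * c ^ (2*r - t) else (0 :: 'a :: comm_semiring_1))"
proof -
  have X_times: "[:0, c, 1:] = monom 1 1 * [:c, 1:]"
    by (simp add: monom_Suc)
  have "[:0, c, 1:] ^ r = monom 1 r * [:c, 1:] ^ r"
    unfolding X_times power_mult_distrib monom_power by simp
  then have shift: "coeff ([:0, c, 1:] ^ r) t = (if t < r then 0 else coeff ([:c, 1:] ^ r) (t - r))"
    by (simp add: coeff_monom_mult)
  have "degree ([:c, 1:] ^ r) \<le> r"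
    using degree_power_le[of "[:c, 1:]" r] by simp
  then have "coeff ([:c, 1:] ^ r) (t - r) = 0" if "2*r < t"
    using that by (intro coeff_eq_0) linarith
  moreover have "coeff ([:c, 1:] ^ r) (t - r) = of_nat (r choose (t - r)) * c ^ (2*r - t)"
    if "r \<le> t" "t \<le> 2*r"
    using that by (simp add: coeff_linear_poly_power mult_2 diff_diff_right)
  ultimately show ?thesis
    using shift by auto
qed

lemma power_dvd_coeff_quad_power: "c ^ (2*r - t) dvd coeff ([:0, c, 1:] ^ r) t"
  by (simp add: coeff_quad_power)

lemma coeff_quad_mult_Suc:
  fixes c :: "'a :: comm_semiring_1"
  shows "coeff ([:0, c, 1:] * p) (Suc l) = c * coeff p l + (if l = 0 then 0 else coeff p (l - 1))"
  by (cases l) simp_all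

lemma coeff_quad_mult_quad_power_eq_0:
  fixes c d :: "'a :: comm_semiring_1"
  assumes "2*r + 2 < l"
  shows "coeff ([:0, c, 1:] * [:0, d, 1:] ^ r) l = 0"
proof (rule coeff_eq_0)
  have "degree ([:0, c, 1:] * [:0, d, 1:] ^ r) \<le> 2 + r * 2"
    using degree_mult_le[of "[:0, c, 1:]" "[:0, d, 1:] ^ r"] degree_power_le[of "[:0, d, 1:]" r]
    by (simp add: order_trans)
  with assms show "degree ([:0, c, 1:] * [:0, d, 1:] ^ r) < l" by linarith
qed

lemma coeff_quad_mult_quad_power_top:
  fixes c d :: "'a :: comm_semiring_1"
  shows "coeff ([:0, c, 1:] * [:0, d, 1:] ^ r) (2*r + 2) = 1"
  using coeff_quad_mult_Suc[of c "[:0, d, 1:] ^ r" "2*r + 1"] by (simp add: coeff_quad_power)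

lemma coeff_quad_mult_quad_power_subtop:
  fixes c d :: "'a :: comm_semiring_1"
  shows "coeff ([:0, c, 1:] * [:0, d, 1:] ^ r) (2*r + 1) = c + of_nat r * d"
proof -
  have "coeff ([:0, d, 1:] ^ r) (2*r - 1) = of_nat r * d" if "r \<noteq> 0"
  proof -
    have "r \<le> 2*r - 1" "2*r - 1 - r = r - 1" "2*r - (2*r - 1) = 1"
      using that by auto
    moreover have "r choose (r - 1) = r"
      using binomial_symmetric[of 1 r] that by simp
    ultimately show ?thesis by (simp add: coeff_quad_power)
  qed
  then show ?thesis
    using coeff_quad_mult_Suc[of c "[:0, d, 1:] ^ r" "2*r"] by (simp add: coeff_quad_power)
qed

lemma two_power_dvd_coeff_quad_mult_quad_power:
  "(2::int) ^ (Suc m * (2*r + 2 - l) - 1) dvd coeff ([:0, 2^m, 1:] * [:0, 2^Suc m, 1:] ^ r) l"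
proof (cases l)
  case (Suc l')
  let ?e = "Suc m * (2*r + 2 - l) - 1" and ?Q = "[:0, 2^Suc m, 1:] :: int poly"
  have Q_dvd: "(2::int) ^ (Suc m * (2*r - t)) dvd coeff (?Q ^ r) t" for t
    unfolding power_mult by (rule power_dvd_coeff_quad_power)
  have "?e \<le> m + Suc m * (2*r - l')"
    using Suc by (cases "l' \<le> 2*r") (auto simp: Suc_diff_le algebra_simps)
  then have "2 ^ ?e dvd 2 ^ m * coeff (?Q ^ r) l'"
    using Q_dvd by (intro mult_power_dvd_of_le) auto
  moreover have "2 ^ ?e dvd coeff (?Q ^ r) (l' - 1)" if "l' \<noteq> 0"
  proof -
    have "2*r - (l' - 1) = 2*r + 2 - l" using Suc that by simp
    then have "2 ^ ?e dvd (2::int) ^ (Suc m * (2*r - (l' - 1)))"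
      by (intro le_imp_power_dvd) simp
    then show ?thesis using Q_dvd by (rule dvd_trans)
  qed
  ultimately show ?thesis
    unfolding Suc coeff_quad_mult_Suc by (auto intro!: dvd_add)
qed simp

section \<open>The rising factorial of even length\<close>

lemma coeff_pochhammer_X: "coeff (pochhammer [:0, 1:] m) l = (of_nat (stirling m l) :: 'a :: comm_semiring_1)"
proof -
  have "pochhammer [:0, 1:] m = (\<Sum>k\<le>m. monom (of_nat (stirling m k) :: 'a) k)"
    by (simp add: stirling_pochhammer [symmetric] monom_altdef of_nat_poly)
  then show ?thesis
    by (cases "l \<le> m") (simp_all add: coeff_sum coeff_monom)
qed

lemma stirling_pos: "1 \<le> k \<Longrightarrow> k \<le> m \<Longrightarrow> 0 < stirling m k"
proof (induction m arbitrary: k)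
  case (Suc m)
  then obtain k' where k: "k = Suc k'" by (cases k) auto
  show ?case
  proof (cases k')
    case 0
    then show ?thesis using k stirling_Suc_n_1[of m] by simp
  next
    case (Suc k'')
    then show ?thesis using Suc.IH[of k'] Suc.prems k by simp
  qed
qed simp

(* Since (x + j)(x + 2h - j) = (x^2 + 2hx) + j(2h - j), pairing the factors of the rising
   factorial x(x + 1)...(x + 2h - 1) gives x(x + h) K(x^2 + 2hx) with K = pair_product_poly h. *)
definition pair_product_poly :: "nat \<Rightarrow> int poly" where
  "pair_product_poly h = (\<Prod>j\<in>{1..<h}. [:int (j * (2*h - j)), 1:])"

lemma degree_pair_product_poly: "degree (pair_product_poly h) \<le> h - 1"
  unfolding pair_product_poly_def
  using degree_prod_sum_le[of "{1..<h}" "\<lambda>j. [:int (j * (2*h - j)), 1:]"] by (simp add: o_def)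

lemma pochhammer_X_double:
  assumes "1 \<le> h"
  shows "pochhammer [:0, 1:] (2*h) = [:0, int h, 1:] * pcompose (pair_product_poly h) [:0, int (2*h), 1:]"
proof -
  define f where "f i = [:int i, 1:]" for i
  have "pochhammer [:0, 1:] (2*h) = prod f {0..<2*h}"
    by (simp add: pochhammer_prod f_def of_nat_poly)
  also have "\<dots> = prod f {0..<h} * prod f {h..<2*h}"
    by (simp add: prod.atLeastLessThan_concat)
  also have "prod f {0..<h} = f 0 * prod f {1..<h}"
    using assms by (simp add: prod.atLeast_Suc_lessThan)
  also have "prod f {h..<2*h} = f h * prod f {Suc h..<2*h}"
    using assms by (simp add: prod.atLeast_Suc_lessThan)
  also have "prod f {Suc h..<2*h} = (\<Prod>j\<in>{1..<h}. f (2*h - j))"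
    by (rule prod.reindex_bij_witness[of _ "\<lambda>j. 2*h - j" "\<lambda>j. 2*h - j"]) auto
  also have "f 0 * prod f {1..<h} * (f h * (\<Prod>j\<in>{1..<h}. f (2*h - j)))
      = (f 0 * f h) * (\<Prod>j\<in>{1..<h}. f j * f (2*h - j))"
    by (simp add: prod.distrib mult_ac)
  also have "f 0 * f h = [:0, int h, 1:]"
    by (simp add: f_def)
  also have "(\<Prod>j\<in>{1..<h}. f j * f (2*h - j)) = pcompose (pair_product_poly h) [:0, int (2*h), 1:]"
    unfolding pair_product_poly_def pcompose_prod
    by (rule prod.cong) (auto simp: f_def of_nat_diff pcompose_pCons algebra_simps)
  finally show ?thesis .
qed

lemma pcompose_eq_sum: "pcompose p q = (\<Sum>r\<le>degree p. smult (coeff p r) (q ^ r))"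
proof -
  have "pcompose p q = poly (map_poly (\<lambda>x. [:x:]) p) q"
    by (rule pcompose_altdef)
  also have "\<dots> = (\<Sum>r\<le>degree p. [:coeff p r:] * q ^ r)"
    by (simp add: poly_altdef degree_map_poly coeff_map_poly)
  finally show ?thesis by simp
qed

lemma stirling_double_eq_sum:
  assumes "1 \<le> h"
  shows "int (stirling (2*h) l) =
    (\<Sum>r<h. coeff (pair_product_poly h) r * coeff ([:0, int h, 1:] * [:0, int (2*h), 1:] ^ r) l)"
proof -
  let ?K = "pair_product_poly h" and ?B = "\<lambda>r. [:0, int h, 1:] * [:0, int (2*h), 1:] ^ r"
  have "pochhammer [:0, 1:] (2*h) = (\<Sum>r\<le>degree ?K. smult (coeff ?K r) (?B r))"
    unfolding pochhammer_X_double[OF assms] pcompose_eq_sum by (simp add: sum_distrib_left)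
  also have "\<dots> = (\<Sum>r<h. smult (coeff ?K r) (?B r))"
    using degree_pair_product_poly[of h] assms
    by (intro sum.mono_neutral_left) (auto simp: coeff_eq_0)
  finally have "coeff (pochhammer [:0, 1:] (2*h)) l = (\<Sum>r<h. coeff ?K r * coeff (?B r) l)"
    by (simp only: coeff_sum coeff_smult)
  then show ?thesis
    by (simp only: coeff_pochhammer_X)
qed

lemma stirling_power_two_eq_diag_plus_tail:
  fixes m i l :: nat
  defines "K \<equiv> pair_product_poly (2^m)"
    and "B \<equiv> \<lambda>r. [:0, 2^m, 1:] * [:0, 2^Suc m, 1:] ^ r"
  assumes "i < 2^m" "2*i < l"
  shows "int (stirling (2^Suc m) l) = coeff K i * coeff (B i) l + (\<Sum>r\<in>{i<..<2^m}. coeff K r * coeff (B r) l)"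
proof -
  have "int (stirling (2^Suc m) l) = (\<Sum>r<2^m. coeff K r * coeff (B r) l)"
    using stirling_double_eq_sum[of "2^m" l] by (simp add: K_def B_def)
  also have "\<dots> = coeff K i * coeff (B i) l + (\<Sum>r\<in>{i<..<2^m}. coeff K r * coeff (B r) l)"
  proof (rule sum_lessThan_eq_term_plus_tail)
    show "coeff K r * coeff (B r) l = 0" if "r < i" for r
      using that assms(4) unfolding B_def by (simp only: coeff_quad_mult_quad_power_eq_0)
  qed (use assms(3) in simp)
  finally show ?thesis .
qed

lemma multiplicity_coeff_pair_product_poly:
  fixes m i :: nat
  defines "v \<equiv> \<lambda>l. multiplicity (2::nat) (stirling (2^Suc m) l)"
  assumes growth: "\<And>i j. i < j \<Longrightarrow> j < 2^m \<Longrightarrow> v (2*i + 2) + 2 \<le> v (2*j + 2) + 2*Suc m*(j - i)"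
    and "i < 2^m"
  shows "coeff (pair_product_poly (2^m)) i \<noteq> 0
    \<and> multiplicity 2 (coeff (pair_product_poly (2^m)) i) = v (2*i + 2)"
proof -
  define s where "s i = int (stirling (2^Suc m) (2*i + 2))" for i
  define A where "A r i = (coeff ([:0, 2^m, 1:] * [:0, 2^Suc m, 1:] ^ r) (2*i + 2) :: int)" for r i
  have v_s: "multiplicity 2 (s i) = v (2*i + 2)" for i
    using multiplicity_of_nat[of 2] by (simp add: s_def v_def)
  have "coeff (pair_product_poly (2^m)) i \<noteq> 0
    \<and> multiplicity 2 (coeff (pair_product_poly (2^m)) i) = multiplicity 2 (s i)"
  proof (rule multiplicity_triangular[where a = A])
    show "s i = coeff (pair_product_poly (2^m)) i + (\<Sum>r\<in>{i<..<2^m}. coeff (pair_product_poly (2^m)) r * A r i)"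
      if "i < 2^m" for i
      using stirling_power_two_eq_diag_plus_tail[OF that, of "2*i + 2"]
      unfolding s_def A_def by (simp only: coeff_quad_mult_quad_power_top mult_1_right)
    show "s i \<noteq> 0" if "i < 2^m" for i
      using stirling_pos[of "2*i + 2" "2^Suc m"] that by (simp add: s_def)
    show "2 ^ Suc (multiplicity 2 (s i)) dvd 2 ^ multiplicity 2 (s r) * A r i"
      if "i < r" "r < 2^m" for i r
    proof -
      have "2*r + 2 - (2*i + 2) = 2*(r - i)"
        by simp
      then have "Suc m * (2*r + 2 - (2*i + 2)) = 2*Suc m*(r - i)"
        by (simp only: mult_ac)
      then have "Suc (v (2*i + 2)) \<le> v (2*r + 2) + (Suc m * (2*r + 2 - (2*i + 2)) - 1)"
        using growth[OF that] that by simp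
      then show ?thesis
        unfolding v_s A_def
        by (rule mult_power_dvd_of_le[OF dvd_refl two_power_dvd_coeff_quad_mult_quad_power])
    qed
  qed (simp_all add: \<open>i < 2^m\<close>)
  then show ?thesis by (simp add: v_s)
qed

lemma multiplicity_stirling_odd_eq_even:
  fixes m i :: nat
  defines "v \<equiv> \<lambda>l. multiplicity (2::nat) (stirling (2^Suc m) l)"
  assumes growth: "\<And>i j. i < j \<Longrightarrow> j < 2^m \<Longrightarrow> v (2*i + 2) + 2 \<le> v (2*j + 2) + 2*Suc m*(j - i)"
    and "i < 2^m"
  shows "v (2*i + 1) = v (2*i + 2) + m"
proof -
  let ?K = "pair_product_poly (2^m)"
  define A where "A r = (coeff ([:0, 2^m, 1:] * [:0, 2^Suc m, 1:] ^ r) (2*i + 1) :: int)" for r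
  have K: "coeff ?K r \<noteq> 0 \<and> multiplicity 2 (coeff ?K r) = v (2*r + 2)" if "r < 2^m" for r
    using multiplicity_coeff_pair_product_poly[of m r] growth that by (simp add: v_def)
  have "A i = 2^m * (2 * int i + 1)"
    unfolding A_def coeff_quad_mult_quad_power_subtop by (simp add: algebra_simps)
  then have "A i \<noteq> 0 \<and> multiplicity 2 (A i) = m"
    by (auto intro: multiplicity_decomposeI)
  then have diag: "coeff ?K i * A i \<noteq> 0 \<and> multiplicity 2 (coeff ?K i * A i) = v (2*i + 2) + m"
    using K[OF assms(3)] prime_elem_multiplicity_mult_distrib[of 2 "coeff ?K i" "A i"] by simp
  have tail: "2 ^ Suc (v (2*i + 2) + m) dvd (\<Sum>r\<in>{i<..<2^m}. coeff ?K r * A r)"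
  proof (intro dvd_sum)
    fix r assume r: "r \<in> {i<..<2^m}"
    have "2*r + 2 - (2*i + 1) = Suc (2*(r - i))"
      using r by auto
    then have "Suc m * (2*r + 2 - (2*i + 1)) - 1 = 2*Suc m*(r - i) + m"
      by (simp add: mult_ac)
    then have "Suc (v (2*i + 2) + m) \<le> v (2*r + 2) + (Suc m * (2*r + 2 - (2*i + 1)) - 1)"
      using growth[of i r] r by simp
    moreover have "2 ^ v (2*r + 2) dvd coeff ?K r"
      using K[of r] r multiplicity_dvd by (metis greaterThanLessThan_iff)
    ultimately show "2 ^ Suc (v (2*i + 2) + m) dvd coeff ?K r * A r"
      unfolding A_def by (intro mult_power_dvd_of_le[OF _ two_power_dvd_coeff_quad_mult_quad_power])
  qed
  have "int (stirling (2^Suc m) (2*i + 1)) = coeff ?K i * A i + (\<Sum>r\<in>{i<..<2^m}. coeff ?K r * A r)"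
    unfolding A_def by (rule stirling_power_two_eq_diag_plus_tail[OF assms(3)]) simp
  then have "multiplicity 2 (int (stirling (2^Suc m) (2*i + 1))) = v (2*i + 2) + m"
    using multiplicity_add_dvd[of "coeff ?K i * A i" 2] diag tail by simp
  then show ?thesis
    using multiplicity_of_nat[of 2] by (simp add: v_def)
qed

section \<open>Growth of the valuations at even positions\<close>

lemma le_add_mult_diff_of_step:
  fixes f :: "nat \<Rightarrow> nat"
  assumes step: "\<And>i. i < j \<Longrightarrow> f i \<le> f (Suc i) + c" and "i \<le> j"
  shows "f i \<le> f j + c * (j - i)"
  using \<open>i \<le> j\<close> step
proof (induction j rule: dec_induct)
  case (step j)
  then have "f i \<le> f j + c * (j - i)" "f j \<le> f (Suc j) + c" by simp_all
  moreover have "c * (Suc j - i) = c * (j - i) + c" using \<open>i \<le> j\<close> by (simp add: Suc_diff_le)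
  ultimately show ?case by linarith
qed simp

lemma even_as_power_two_minus_even:
  fixes l :: nat
  assumes "even l" "2 \<le> l"
  obtains M k where "2 \<le> M" "l + k = 2^M" "2 \<le> k" "k \<le> 2^(M - 1)" "even k"
proof -
  obtain p where p: "2^p \<le> l" "l < 2^Suc p"
    using ex_power_ivl1[of 2 l] assms(2) by auto
  have "p \<noteq> 0"
    using p assms(2) by (cases p) auto
  define k where "k = 2^Suc p - l"
  have k: "l + k = 2^Suc p" "k \<le> 2^p" "k \<noteq> 0"
    using p by (simp_all add: k_def)
  moreover have "even k"
    using k(1) assms(1) by (metis dvd_add_right_iff dvd_triv_left power_Suc)
  ultimately have "2 \<le> k"
    by (auto elim: evenE)
  with k \<open>even k\<close> \<open>p \<noteq> 0\<close> show ?thesis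
    using that[of "Suc p" k] by simp
qed

lemma valuation_formula_step:
  fixes V :: "nat \<Rightarrow> nat" and n l :: nat
  assumes formula: "\<And>M k. 2 \<le> M \<Longrightarrow> M \<le> n \<Longrightarrow> 2 \<le> k \<Longrightarrow> k \<le> 2^(M - 1) \<Longrightarrow> even k \<Longrightarrow>
      int (V (2^M - k)) = 2^n - 2^M - (int n - int M) * (2^M - int k) + int M - 1 - int (multiplicity (2::nat) k)"
    and l: "even l" "2 \<le> l" "l + 2 \<le> 2^n"
  shows "V l \<le> V (l + 2) + 2 * (n - 1)"
proof -
  obtain M k where M: "2 \<le> M" and lk: "l + k = 2^M" and k: "2 \<le> k" "k \<le> 2^(M - 1)" "even k"
    using even_as_power_two_minus_even[OF l(1,2)] .
  have half: "2^M = 2 * (2::nat)^(M - 1)"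
    using M by (simp flip: power_Suc)
  then have "(2::nat)^(M - 1) < 2^n"
    using lk k(2) l(3) by linarith
  then have "M \<le> n"
    by simp
  have "l = 2^M - k"
    using lk by simp
  then have V_l: "int (V l) = 2^n - 2^M - (int n - int M) * (2^M - int k) + int M - 1 - int (multiplicity (2::nat) k)"
    by (simp only:) (rule formula[OF M \<open>M \<le> n\<close> k])
  have v_pow: "multiplicity (2::nat) (2^e) = e" for e
    by (rule multiplicity_prime_power) (rule prime_imp_prime_elem[OF two_is_prime_nat])
  have v_two: "multiplicity (2::nat) 2 = 1"
    using v_pow[of 1] by simp
  consider "2 < k" | "k = 2" "M < n" | "k = 2" "M = n"
    using k(1) \<open>M \<le> n\<close> by linarith
  then show ?thesis
  proof cases
    case 1
    define j where "j = k - 2"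
    have j: "k = j + 2" "2 \<le> j" "j \<le> 2^(M - 1)" "even j"
      using 1 k by (auto simp: j_def elim!: evenE)
    have "l + 2 = 2^M - j"
      using lk j(1) by linarith
    then have V_next: "int (V (l + 2)) = 2^n - 2^M - (int n - int M) * (2^M - int j) + int M - 1
        - int (multiplicity (2::nat) j)"
      by (simp only:) (rule formula; use j M \<open>M \<le> n\<close> in simp)
    have "int (V l) - int (V (l + 2))
        = 2 * (int n - int M) + int (multiplicity 2 j) - int (multiplicity 2 k)"
      unfolding V_l V_next j(1) by (simp add: algebra_simps)
    moreover have "multiplicity 2 j < M"
      using j half by (intro multiplicity_less_of_less) auto
    ultimately show ?thesis
      using M \<open>M \<le> n\<close> by simp
  next
    case 2
    have "l + 2 = 2^Suc M - 2^M"
      using lk 2 by simp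
    then have "int (V (l + 2)) = 2^n - 2^Suc M - (int n - int (Suc M)) * (2^Suc M - int (2^M)) + int (Suc M) - 1
        - int (multiplicity (2::nat) (2^M))"
      by (simp only:) (rule formula; use M 2 in simp)
    then have "int (V l) - int (V (l + 2)) = 2 * (int n - int M) + int M - 2"
      unfolding V_l \<open>k = 2\<close> by (simp add: v_two v_pow algebra_simps)
    then show ?thesis
      using \<open>M \<le> n\<close> by simp
  next
    case 3
    then show ?thesis
      using V_l by (simp add: v_two)
  qed
qed

theorem lemma2p5:
  fixes n :: nat
  assumes "n \<ge> 2"
    and hyp: "\<And>m k. 2 \<le> m \<Longrightarrow> m \<le> n \<Longrightarrow> 2 \<le> k \<Longrightarrow> k \<le> 2 ^ (m - 1) + 1 \<Longrightarrow> even k \<Longrightarrow>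
      int (multiplicity (2::nat) (stirling (2 ^ n) (2 ^ m - k)))
        = 2 ^ n - 2 ^ m - (int n - int m) * (2 ^ m - int k) + int m - 1 - int (multiplicity (2::nat) k)"
  shows "\<forall>i. 1 \<le> i \<and> i \<le> 2 ^ (n - 1) \<longrightarrow>
      multiplicity (2::nat) (stirling (2 ^ n) (2 * i - 1))
        = multiplicity (2::nat) (stirling (2 ^ n) (2 * i)) + (n - 1)"
proof -
  obtain m where n: "n = Suc m"
    using assms(1) by (cases n) auto
  define V where "V l = multiplicity (2::nat) (stirling (2^n) l)" for l
  have step: "V (2*i + 2) \<le> V (2*Suc i + 2) + 2*m" if "Suc i < 2^m" for i
  proof -
    have "V (2*i + 2) \<le> V (2*i + 2 + 2) + 2*(n - 1)"
    proof (rule valuation_formula_step)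
      show "int (V (2^M - k)) = 2^n - 2^M - (int n - int M) * (2^M - int k) + int M - 1
          - int (multiplicity (2::nat) k)"
        if "2 \<le> M" "M \<le> n" "2 \<le> k" "k \<le> 2^(M - 1)" "even k" for M k
        using hyp[of M k] that by (simp add: V_def)
    qed (use that n in auto)
    then show ?thesis
      using n by (simp add: add.assoc)
  qed
  have growth: "V (2*i + 2) + 2 \<le> V (2*j + 2) + 2*Suc m*(j - i)" if "i < j" "j < 2^m" for i j
  proof -
    have "V (2*i + 2) \<le> V (2*j + 2) + 2*m*(j - i)"
      using le_add_mult_diff_of_step[of j "\<lambda>i. V (2*i + 2)" "2*m" i] step that by simp
    moreover have "2*Suc m*(j - i) = 2*m*(j - i) + 2*(j - i)" "1 \<le> j - i"
      using that by (simp_all add: add_mult_distrib)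
    ultimately show ?thesis
      by linarith
  qed
  show ?thesis
  proof (intro allI impI)
    fix i :: nat assume "1 \<le> i \<and> i \<le> 2^(n - 1)"
    then obtain i' where "i = Suc i'" "i' < 2^m"
      using n by (cases i) auto
    then show "multiplicity 2 (stirling (2^n) (2*i - 1)) = multiplicity 2 (stirling (2^n) (2*i)) + (n - 1)"
      using multiplicity_stirling_odd_eq_even[of m i'] growth n by (simp add: V_def)
  qed
qed

end
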